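(* Let $M$ be an oriented Legendrian knot mosaic representing a Legendrian knot $\Lambda$. Let $U$ and $D$ be the numbers of upward- and downward-oriented cusps in the diagram depicted by $M$, let $N$ be the number of negative crossings, and let $|M|_{T_5}$ and $|M|_{T_6}$ be the numbers of tiles of $M$ equal to $T_5$ and $T_6$ respectively. If $U\ge D$, then $$2|\operatorname{rot}(\Lambda)|\le 2N+|M|_{T_5}+|M|_{T_6}.$$
   Context: Legendrian knots are taken in the standard contact structure on $\mathbb{R}^3$ and represented by front ($xz$-) projections, which have cusps in place of vertical tangencies and in which the strand of more negative slope is the overstrand at every crossing. For an oriented front diagram with $D$ downward-oriented cusps (cusps traversed moving downward) and $U$ upward-oriented cusps, $\operatorname{rot}=\frac12(D-U)$. Legendrian mosaic tiles: take a square tile whose four edge midpoints are potential connection points. The tiles are $T_0$ (empty); $T_1,T_2,T_3,T_4$ (a single arc joining the midpoints of two adjacent edges, one tile for each of the four pairs of adjacent edges); $T_5,T_6$ (a single straight segment joining the midpoints of two opposite edges, one for each pair); $T_7,T_8$ (two disjoint arcs, each joining midpoints of two adjacent edges, together using all four midpoints); $T_{10}$ (two segments joining opposite edges and crossing once). A Legendrian $n$-mosaic is an $n\times n$ array of these tiles, with the whole array rotated $45^\circ$ counterclockwise so that the strands form a front diagram: after rotation the arc of $T_2$, the arc of $T_4$ and both arcs of $T_8$ each contain a cusp, the arcs of $T_1,T_3,T_7$ contain no cusp, $T_5,T_6$ are straight segments of slope $\pm1$, and in $T_{10}$ the strand of negative slope passes over. The mosaic is suitably connected if connection points agree across every shared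 edge and no connection point lies on the outer boundary; it then depicts a Legendrian link front. An oriented Legendrian knot mosaic is a suitably connected Legendrian mosaic depicting a knot, together with an orientation of that knot. *)

theory Defs
  imports Complex_Main
begin

text \<open>Connection points of an (unrotated) tile: midpoints of the North, East,
South and West edges.  After rotating the whole mosaic 45 degrees
counterclockwise, the N point lies upper-left, E upper-right, S lower-right
and W lower-left.  Grid position (i,j): row i (row 0 on top), column j.\<close>

datatype edge = N | E | S | W

datatype tile = T0 | T1 | T2 | T3 | T4 | T5 | T6 | T7 | T8 | T10

text \<open>After rotation: arc N-W has a cusp at the left vertex, arc E-S a cusp at the
right vertex; arcs N-E and S-W are smooth (top/bottom); N-S has slope -1 and
E-W slope +1; in T10 the N-S (negative slope) strand is the overstrand.\<close>

fun arcs :: "tile \<Rightarrow> edge set set" where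
  "arcs T0 = {}"
| "arcs T1 = {{N, E}}"
| "arcs T2 = {{N, W}}"
| "arcs T3 = {{S, W}}"
| "arcs T4 = {{E, S}}"
| "arcs T5 = {{N, S}}"
| "arcs T6 = {{E, W}}"
| "arcs T7 = {{N, E}, {S, W}}"
| "arcs T8 = {{N, W}, {E, S}}"
| "arcs T10 = {{N, S}, {E, W}}"

definition conn :: "tile \<Rightarrow> edge set" where
  "conn t = \<Union> (arcs t)"

fun opp :: "edge \<Rightarrow> edge" where
  "opp N = S" | "opp S = N" | "opp E = W" | "opp W = E"

fun nbr :: "nat \<times> nat \<Rightarrow> edge \<Rightarrow> nat \<times> nat" where
  "nbr (i, j) N = (i - 1, j)"
| "nbr (i, j) S = (i + 1, j)"
| "nbr (i, j) E = (i, j + 1)"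
| "nbr (i, j) W = (i, j - 1)"

type_synonym mosaic = "nat \<times> nat \<Rightarrow> tile"

definition grid :: "nat \<Rightarrow> (nat \<times> nat) set" where
  "grid n = {(i, j). i < n \<and> j < n}"

definition suitably_connected :: "nat \<Rightarrow> mosaic \<Rightarrow> bool" where
  "suitably_connected n M \<longleftrightarrow>
    (\<forall>i<n. \<forall>j<n.
       (E \<in> conn (M (i, j)) \<longleftrightarrow> (j + 1 < n \<and> W \<in> conn (M (i, j + 1)))) \<and>
       (S \<in> conn (M (i, j)) \<longleftrightarrow> (i + 1 < n \<and> N \<in> conn (M (i + 1, j)))) \<and>
       (N \<in> conn (M (i, j)) \<longrightarrow> 0 < i) \<and>
       (W \<in> conn (M (i, j)) \<longrightarrow> 0 < j))"

definition arcs_of :: "nat \<Rightarrow> mosaic \<Rightarrow> ((nat \<times> nat) \<times> edge set) set" where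
  "arcs_of n M = {(p, A). p \<in> grid n \<and> A \<in> arcs (M p)}"

text \<open>A traversal step: (tile position, entry point, exit point).\<close>
type_synonym step = "(nat \<times> nat) \<times> edge \<times> edge"

definition step_arc :: "step \<Rightarrow> (nat \<times> nat) \<times> edge set" where
  "step_arc st = (fst st, {fst (snd st), snd (snd st)})"

text \<open>Such a traversal exists iff the depicted link is a knot, and it records an
orientation of that knot.\<close>
definition oriented_knot_mosaic :: "nat \<Rightarrow> mosaic \<Rightarrow> step list \<Rightarrow> bool" where
  "oriented_knot_mosaic n M w \<longleftrightarrow>
    suitably_connected n M \<and> w \<noteq> [] \<and>
    bij_betw (\<lambda>k. step_arc (w ! k)) {..<length w} (arcs_of n M) \<and>
    (\<forall>k<length w.
       fst (w ! ((k + 1) mod length w)) = nbr (fst (w ! k)) (snd (snd (w ! k))) \<and>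
       fst (snd (w ! ((k + 1) mod length w))) = opp (snd (snd (w ! k))))"

text \<open>Downward-oriented cusps: N to W (left cusp, moving down) and E to S
(right cusp, moving down).  Upward-oriented: W to N and S to E.\<close>
definition down_cusps :: "step list \<Rightarrow> nat" where
  "down_cusps w = card {k. k < length w \<and> snd (w ! k) \<in> {(N, W), (E, S)}}"

definition up_cusps :: "step list \<Rightarrow> nat" where
  "up_cusps w = card {k. k < length w \<and> snd (w ! k) \<in> {(W, N), (S, E)}}"

definition rot :: "step list \<Rightarrow> real" where
  "rot w = (real (down_cusps w) - real (up_cusps w)) / 2"

text \<open>After rotation the over strand (N-S) has
direction (1,-1) when traversed N to S and (-1,1) when traversed S to N; the
under strand (E-W) has direction (1,1) when traversed W to E and (-1,-1) when
traversed E to W.  The crossing is positive iff the cross product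
over x under is positive; hence negative iff (N to S and E to W) or
(S to N and W to E).\<close>
definition negative_crossing :: "step list \<Rightarrow> nat \<times> nat \<Rightarrow> bool" where
  "negative_crossing w p \<longleftrightarrow>
     ((p, N, S) \<in> set w \<and> (p, E, W) \<in> set w) \<or>
     ((p, S, N) \<in> set w \<and> (p, W, E) \<in> set w)"

definition neg_crossings :: "nat \<Rightarrow> mosaic \<Rightarrow> step list \<Rightarrow> nat" where
  "neg_crossings n M w = card {p \<in> grid n. M p = T10 \<and> negative_crossing w p}"

definition tile_count :: "nat \<Rightarrow> mosaic \<Rightarrow> tile \<Rightarrow> nat" where
  "tile_count n M t = card {p \<in> grid n. M p = t}"

end

theory Submission
  imports Defs
begin

text \<open>In the rotated picture the quantity j - i of tile (i, j) is its height:
leaving a tile through one of its upper points N, E raises it by one, leaving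
through a lower point lowers it by one.  Since the knot closes up, half of all
steps leave upwards; as the entry point of a step is opposite to the exit of the
previous step, half of all steps also enter from above.  Summing the identity
[upward cusp] - [downward cusp] = [leaves up] - [enters up] + [straight step
down] - [straight step up] over the traversal therefore gives U - D as the
number of straight strands traversed downwards minus those traversed upwards.
A T5 or T6 tile contributes at most 1 to this, a T10 tile at most 2, and a
positive crossing (one strand down, one strand up) contributes 0.\<close>

definition upper :: "edge \<Rightarrow> bool" where
  "upper e \<longleftrightarrow> e = N \<or> e = E"

definition height :: "nat \<times> nat \<Rightarrow> int" where
  "height p = int (snd p) - int (fst p)"

definition straight_down :: "edge \<times> edge \<Rightarrow> bool" where
  "straight_down d \<longleftrightarrow> d \<in> {(N, S), (E, W)}"

definition straight_up :: "edge \<times> edge \<Rightarrow> bool" where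
  "straight_up d \<longleftrightarrow> d \<in> {(S, N), (W, E)}"

definition strand_balance :: "step list \<Rightarrow> nat \<times> nat \<Rightarrow> int" where
  "strand_balance w q =
     of_bool ((q, N, S) \<in> set w) + of_bool ((q, E, W) \<in> set w)
     - of_bool ((q, S, N) \<in> set w) - of_bool ((q, W, E) \<in> set w)"

lemma sum_lessThan_rotate:
  fixes f :: "nat \<Rightarrow> 'a::comm_monoid_add"
  assumes "0 < L"
  shows "(\<Sum>k<L. f ((k + 1) mod L)) = (\<Sum>k<L. f k)"
proof -
  obtain m where L: "L = Suc m" using assms by (cases L) auto
  have "(\<Sum>k<Suc m. f ((k + 1) mod Suc m)) = (\<Sum>k<m. f ((k + 1) mod Suc m)) + f 0"
    by simp
  also have "(\<Sum>k<m. f ((k + 1) mod Suc m)) = (\<Sum>k<m. f (Suc k))"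
    by (rule sum.cong) auto
  also have "(\<Sum>k<m. f (Suc k)) + f 0 = (\<Sum>k<Suc m. f k)"
    by (subst sum.lessThan_Suc_shift) (simp add: add.commute)
  finally show ?thesis using L by simp
qed

lemma sum_lessThan_cyclic_differences:
  fixes f :: "nat \<Rightarrow> 'a::ab_group_add"
  assumes "0 < L"
  shows "(\<Sum>k<L. f ((k + 1) mod L) - f k) = 0"
  using sum_lessThan_rotate[OF assms, of f] by (simp add: sum_subtractf)

lemma sum_of_bool_snd_eq_by_fst:
  assumes "finite G" "finite X" "fst ` X \<subseteq> G"
  shows "(\<Sum>x\<in>X. of_bool (snd x = d)) = (\<Sum>q\<in>G. of_bool ((q, d) \<in> X) :: 'a::semiring_1)"
proof -
  have "bij_betw (\<lambda>q. (q, d)) (G \<inter> {q. (q, d) \<in> X}) (X \<inter> {x. snd x = d})"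
    unfolding bij_betw_def inj_on_def using assms(3) by force
  then show ?thesis using assms(1,2) by (simp add: bij_betw_same_card)
qed

lemma finite_grid: "finite (grid n)"
  by (rule finite_subset[of _ "{..<n} \<times> {..<n}"]) (auto simp: grid_def)

lemma upper_opp: "upper (opp e) \<longleftrightarrow> \<not> upper e"
  by (cases e) (simp_all add: upper_def)

lemma height_nbr:
  assumes "e = N \<Longrightarrow> 0 < fst p" and "e = W \<Longrightarrow> 0 < snd p"
  shows "height (nbr p e) = height p + 2 * of_bool (upper e) - 1"
  using assms by (cases p; cases e) (auto simp: height_def upper_def)

lemma cusp_step_balance:
  "of_bool (d \<in> {(W, N), (S, E)}) - of_bool (d \<in> {(N, W), (E, S)})
   = of_bool (upper (snd d)) - of_bool (upper (fst d))
     + of_bool (straight_down d) - (of_bool (straight_up d) :: int)"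
  by (cases d; cases "fst d"; cases "snd d") (simp_all add: upper_def straight_down_def straight_up_def)

locale knot_traversal =
  fixes n :: nat and M :: mosaic and w :: "step list"
  assumes knot: "oriented_knot_mosaic n M w"
begin

abbreviation "L \<equiv> length w"
abbreviation "tile k \<equiv> fst (w ! k)"
abbreviation "entry k \<equiv> fst (snd (w ! k))"
abbreviation "exit k \<equiv> snd (snd (w ! k))"

lemma length_pos: "0 < L"
  using knot by (simp add: oriented_knot_mosaic_def)

lemma step_in_arcs:
  assumes "k < L"
  shows "tile k \<in> grid n" and "{entry k, exit k} \<in> arcs (M (tile k))"
proof -
  have "step_arc (w ! k) \<in> arcs_of n M"
    using knot assms unfolding oriented_knot_mosaic_def by (auto dest: bij_betw_apply)
  then show "tile k \<in> grid n" "{entry k, exit k} \<in> arcs (M (tile k))"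
    by (auto simp: step_arc_def arcs_of_def)
qed

lemma next_step:
  assumes "k < L"
  shows "tile (Suc k mod L) = nbr (tile k) (exit k)"
    and "entry (Suc k mod L) = opp (exit k)"
  using knot assms unfolding oriented_knot_mosaic_def by auto

lemma distinct_steps: "distinct w"
proof -
  have "inj_on ((!) w) {..<L}"
    using knot unfolding oriented_knot_mosaic_def bij_betw_def inj_on_def by metis
  then show ?thesis by (auto simp: distinct_conv_nth inj_on_def)
qed

lemma set_eq_image_nth: "set w = (!) w ` {..<L}"
  by (auto simp: set_conv_nth)

lemma sum_steps: "(\<Sum>k<L. f (w ! k)) = (\<Sum>s\<in>set w. f s)"
  by (simp add: set_eq_image_nth sum.reindex inj_on_nth[OF distinct_steps])

lemma traversed_in_arcs:
  assumes "(q, a, b) \<in> set w"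
  shows "{a, b} \<in> arcs (M q)"
proof -
  obtain k where "k < L" "w ! k = (q, a, b)" using assms by (auto simp: in_set_conv_nth)
  then show ?thesis using step_in_arcs(2)[of k] by simp
qed

lemma arc_traversed:
  assumes "q \<in> grid n" "A \<in> arcs (M q)"
  obtains a b where "(q, a, b) \<in> set w" "{a, b} = A"
proof -
  have "(q, A) \<in> arcs_of n M" using assms by (simp add: arcs_of_def)
  then obtain k where "k < L" "step_arc (w ! k) = (q, A)"
    using knot unfolding oriented_knot_mosaic_def bij_betw_def by force
  then have "tile k = q" "{entry k, exit k} = A" by (simp_all add: step_arc_def)
  moreover have "(tile k, entry k, exit k) \<in> set w" using \<open>k < L\<close> by simp
  ultimately show ?thesis using that by blast
qed

text \<open>No connection point lies on the outer boundary, so exits never leave the grid.\<close>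
lemma height_step:
  assumes "k < L"
  shows "height (tile (Suc k mod L)) = height (tile k) + 2 * of_bool (upper (exit k)) - 1"
proof -
  have "exit k \<in> conn (M (tile k))" and "tile k \<in> grid n"
    using step_in_arcs[OF assms] by (auto simp: conn_def)
  with knot have "exit k = N \<Longrightarrow> 0 < fst (tile k)" and "exit k = W \<Longrightarrow> 0 < snd (tile k)"
    unfolding oriented_knot_mosaic_def suitably_connected_def grid_def
    by (cases "tile k"; force)+
  then have "height (nbr (tile k) (exit k)) = height (tile k) + 2 * of_bool (upper (exit k)) - 1"
    by (rule height_nbr)
  then show ?thesis by (simp only: next_step(1)[OF assms])
qed

lemma sum_upper_exits: "2 * (\<Sum>k<L. of_bool (upper (exit k))) = int L"
proof -
  have "(\<Sum>k<L. height (tile ((k + 1) mod L)) - height (tile k)) = 0"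
    by (rule sum_lessThan_cyclic_differences[OF length_pos])
  then have "(\<Sum>k<L. 2 * of_bool (upper (exit k)) - 1) = (0::int)"
    by (simp add: height_step)
  then show ?thesis by (simp add: sum_subtractf sum_distrib_left)
qed

lemma sum_upper_entries_eq_sum_upper_exits:
  "(\<Sum>k<L. of_bool (upper (entry k))) = (\<Sum>k<L. of_bool (upper (exit k)) :: int)"
proof -
  have "(\<Sum>k<L. of_bool (upper (entry k))) = (\<Sum>k<L. of_bool (upper (entry ((k + 1) mod L))) :: int)"
    by (rule sum_lessThan_rotate[OF length_pos, symmetric])
  also have "\<dots> = (\<Sum>k<L. 1 - of_bool (upper (exit k)))"
    by (rule sum.cong) (simp_all add: next_step(2) upper_opp)
  finally show ?thesis using sum_upper_exits by (simp add: sum_subtractf)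
qed

lemma cusp_difference:
  "int (up_cusps w) - int (down_cusps w)
   = (\<Sum>s\<in>set w. of_bool (straight_down (snd s)) - of_bool (straight_up (snd s)))"
proof -
  have "int (up_cusps w) - int (down_cusps w)
     = (\<Sum>k<L. of_bool (snd (w ! k) \<in> {(W, N), (S, E)}) - of_bool (snd (w ! k) \<in> {(N, W), (E, S)}))"
  proof -
    have "(\<Sum>k<L. of_bool (P k)) = int (card {k. k < L \<and> P k})" for P
      by (simp add: Int_def)
    then show ?thesis by (simp only: up_cusps_def down_cusps_def sum_subtractf)
  qed
  also have "\<dots> = (\<Sum>k<L. of_bool (upper (exit k)) - of_bool (upper (entry k)))
                 + (\<Sum>k<L. of_bool (straight_down (snd (w ! k))) - of_bool (straight_up (snd (w ! k))))"
    unfolding cusp_step_balance by (simp add: sum.distrib sum_subtractf)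
  also have "\<dots> = (\<Sum>k<L. of_bool (straight_down (snd (w ! k))) - of_bool (straight_up (snd (w ! k))))"
    using sum_upper_entries_eq_sum_upper_exits by (simp add: sum_subtractf del: sum_of_bool_eq)
  also have "\<dots> = (\<Sum>s\<in>set w. of_bool (straight_down (snd s)) - of_bool (straight_up (snd s)))"
    by (rule sum_steps)
  finally show ?thesis .
qed

lemma straight_balance_by_tile:
  "(\<Sum>s\<in>set w. of_bool (straight_down (snd s)) - of_bool (straight_up (snd s)))
   = (\<Sum>q\<in>grid n. strand_balance w q)"
proof -
  have tiles: "fst ` set w \<subseteq> grid n"
    using step_in_arcs(1) by (auto simp: set_eq_image_nth)
  have "of_bool (straight_down d) - of_bool (straight_up d)
        = of_bool (d = (N, S)) + of_bool (d = (E, W)) - of_bool (d = (S, N)) - (of_bool (d = (W, E)) :: int)"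
    for d
    by (auto simp: straight_down_def straight_up_def)
  then show ?thesis
    by (simp add: strand_balance_def sum.distrib sum_subtractf
        sum_of_bool_snd_eq_by_fst[OF finite_grid _ tiles] del: sum_of_bool_eq)
qed

lemma strand_balance_le:
  assumes "q \<in> grid n"
  shows "strand_balance w q
         \<le> of_bool (M q = T5) + of_bool (M q = T6) + 2 * of_bool (M q = T10 \<and> negative_crossing w q)"
proof -
  have NS: "(q, N, S) \<notin> set w \<and> (q, S, N) \<notin> set w" if "{N, S} \<notin> arcs (M q)"
    using that traversed_in_arcs[of q N S] traversed_in_arcs[of q S N] by (auto simp: insert_commute)
  have EW: "(q, E, W) \<notin> set w \<and> (q, W, E) \<notin> set w" if "{E, W} \<notin> arcs (M q)"
    using that traversed_in_arcs[of q E W] traversed_in_arcs[of q W E] by (auto simp: insert_commute)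
  show ?thesis
  proof (cases "M q")
    case T10
    obtain a b where "(q, a, b) \<in> set w" "{a, b} = {N, S}"
      using arc_traversed[OF assms, of "{N, S}"] T10 by auto
    moreover obtain c d where "(q, c, d) \<in> set w" "{c, d} = {E, W}"
      using arc_traversed[OF assms, of "{E, W}"] T10 by auto
    ultimately show ?thesis
      using T10 by (auto simp: doubleton_eq_iff strand_balance_def negative_crossing_def)
  qed (use NS EW in \<open>auto simp: strand_balance_def doubleton_eq_iff\<close>)
qed

end

theorem lemma2p2:
  fixes n :: nat and M :: mosaic and w :: "step list"
  assumes "oriented_knot_mosaic n M w"
    and "up_cusps w \<ge> down_cusps w"
  shows "2 * \<bar>rot w\<bar> \<le> 2 * real (neg_crossings n M w) + real (tile_count n M T5) + real (tile_count n M T6)"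
proof -
  interpret knot_traversal n M w by (rule knot_traversal.intro) (fact assms(1))
  have "int (up_cusps w) - int (down_cusps w) = (\<Sum>q\<in>grid n. strand_balance w q)"
    by (simp add: cusp_difference straight_balance_by_tile)
  also have "\<dots> \<le> (\<Sum>q\<in>grid n. of_bool (M q = T5) + of_bool (M q = T6)
                      + 2 * of_bool (M q = T10 \<and> negative_crossing w q))"
    by (intro sum_mono strand_balance_le)
  also have "\<dots> = 2 * int (neg_crossings n M w) + int (tile_count n M T5) + int (tile_count n M T6)"
    by (simp add: sum.distrib neg_crossings_def tile_count_def finite_grid Int_def
        flip: sum_distrib_left)
  finally have "real (up_cusps w) - real (down_cusps w)
      \<le> 2 * real (neg_crossings n M w) + real (tile_count n M T5) + real (tile_count n M T6)"
    by linarith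
  moreover have "2 * \<bar>rot w\<bar> = real (up_cusps w) - real (down_cusps w)"
    using assms(2) by (simp add: rot_def abs_if field_simps)
  ultimately show ?thesis by simp
qed

end
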